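(* Let $S_i, S_p, S_b$ be blocks and $M$ an expression such that the statement $W = \mathsf{for}\ S_i\ M\ S_p\ S_b$ satisfies the loop-halting restriction, and let $G, L, \mathcal{N}$ be a global environment, local state and namespace. Then for $\mathbb{M} \in \{\mathsf{break}, \mathsf{continue}\}$ there are no $G', L'$ with $\langle W \mid G; L; \mathcal{N}\rangle \Downarrow \langle \mathbb{M} \mid G'; L'; \mathcal{N}\rangle$.
   Context: Yul syntax. Fix values $v,c$, variables $x,y,z,f$, opcodes $op$. Expressions: $M ::= f(M_1,\dots,M_n) \mid op(M_1,\dots,M_n) \mid x \mid v$. Statements: $S ::= \{S^*\} \mid \mathsf{function}\ f(\vec y) \to \vec z\ \{S^*\} \mid \mathsf{let}\ \vec x := M \mid \vec x := M \mid M \mid \mathsf{if}\ M\ \{S^*\} \mid \mathsf{switch}\ M\ (\mathsf{case}\ c_i\ \{S^*\})^*\ \mathsf{default}\ \{S^*\} \mid \mathsf{for}\ \{S^*\}\ M\ \{S^*\}\ \{S^*\} \mid \mathsf{break} \mid \mathsf{continue} \mid \mathsf{leave}$ (for-loop parts: init block, condition, post-iteration block $S_p$, body $S_b$). Sub-statements: $S\preceq S'$ if $S=S'$ or $S$ is (transitively) a component statement of $S'$ (an element of a block, the body of an if, a case/default block of a switch, the init/post/body block of a for, or the body of a function definition). Loop-halting restriction on a statement $S'$: for every occurrence of $\mathsf{break}$ or $\mathsf{continue}$ at $S\preceq S'$, there is a for-loop $S_f=\mathsf{for}\ S_i'\ M'\ S_p'\ S_b'$ with $S_f\preceq S'$ and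 $S\preceq S_b'$, and no function definition $\mathsf{function}\ g(\vec y)\to\vec z\ B$ with that definition $\preceq S_f$ and $S\preceq B$. Modes: $\mathbb{M} ::= \mathsf{regular}\mid\mathsf{break}\mid\mathsf{continue}\mid\mathsf{leave}$. Tuples $\langle v_1..v_m\rangle$, $\langle v\rangle=v$, $\langle\rangle=\mathsf{regular}$. The dialect supplies $\mathsf{true}/\mathsf{false}$ predicates and an opcode relation $\langle op(\vec v)\mid G\rangle\Downarrow_{\mathsf{opc}}\langle S'\mid G'\rangle$ ($G,G'$ global environments). Configurations $\langle S\mid G;L;\mathcal{N}\rangle$: $L$ finite map variables to values, $\mathcal{N}$ finite map function names to $(\vec y,\vec z,S_b)$. $L_1\upharpoonright L$: restriction of $L_1$ to $\mathrm{dom}(L)$; $\uplus$ disjoint union; $\mathrm{funs}(\{S_1..S_n\})$ maps each function defined directly among the $S_i$ to (parameters, returns, body); for $\mathcal{N}(f)=((y_1..y_n),(z_1..z_m),S_b)$, $L_f=\{y_i\mapsto v_i\}\uplus\{z_j\mapsto 0\}$. Big-step relations $\Downarrow$ (statements), $\Downarrow_{\mathsf{seq}}$ (sequences), $\Downarrow_{\mathsf{exp}}$ (expressions), inductively defined by: (Block) if $\langle S_1,..,S_n\mid G;L;\mathcal{N}\uplus\mathcal{N}_1\rangle\Downarrow_{\mathsf{seq}}\langle\mathbb{M}\mid G_1;L_1;\mathcal{N}\uplus\mathcal{N}_1\rangle$ with $\mathcal{N}_1=\mathrm{funs}(\{S_1..S_n\})$ then $\langle\{S_1..S_n\}\mid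 G;L;\mathcal{N}\rangle\Downarrow\langle\mathbb{M}\mid G_1;L_1\upharpoonright L;\mathcal{N}\rangle$. (SeqEmpty) empty sequence $\Downarrow_{\mathsf{seq}}\mathsf{regular}$, unchanged. (SeqReg) $S_1\Downarrow\mathsf{regular}$ from $(G,L)$ to $(G_1,L_1)$ and $\vec S\Downarrow_{\mathsf{seq}}\mathbb{M}$ from $(G_1,L_1)$ to $(G_2,L_2)$ give $S_1,\vec S\Downarrow_{\mathsf{seq}}\mathbb{M}$ to $(G_2,L_2)$. (SeqIrreg) $S_1\Downarrow\mathbb{M}\in\{\mathsf{break},\mathsf{continue},\mathsf{leave}\}$ to $(G_1,L_1)$ gives $S_1,\vec S\Downarrow_{\mathsf{seq}}\mathbb{M}$ to $(G_1,L_1)$. (FunDef) function definitions $\Downarrow\mathsf{regular}$, unchanged. (Decl) if $M\Downarrow_{\mathsf{exp}}\langle\vec v\rangle$ from $(G,L)$ to $(G_1,L_1)$ and $\vec x\notin\mathrm{dom}(L)$ then $\mathsf{let}\ \vec x:=M\Downarrow\mathsf{regular}$ to $(G_1,L_1[\vec x\mapsto\vec v])$; assignment same with $\vec x\in\mathrm{dom}(L)$. (If) $M\Downarrow_{\mathsf{exp}}\mathsf{false}$ to $(G_0,L_0)$ gives $\mathsf{if}\ M\ S\Downarrow\mathsf{regular}$ to $(G_0,L_0)$; $M\Downarrow_{\mathsf{exp}}\mathsf{true}$ to $(G_0,L_0)$ and $S\Downarrow\mathbb{M}$ to $(G_1,L_1)$ give $\mathsf{if}\ M\ S\Downarrow\mathbb{M}$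 to $(G_1,L_1)$. (Switch) cases $\mathsf{case}\ c_i\ S_i$: if $M\Downarrow_{\mathsf{exp}}v\notin\{c_1..c_n\}$ evaluate default $S_d$; if $M\Downarrow_{\mathsf{exp}}c_k$ with $c_k\notin\{c_1..c_{k-1}\}$ evaluate $S_k$. (ForInit) if $n>0$ and $\{S_1..S_n\ \mathsf{for}\ \{\}\ M\ S_p\ S_b\}\Downarrow\mathbb{M}$ then $\mathsf{for}\ \{S_1..S_n\}\ M\ S_p\ S_b\Downarrow\mathbb{M}$ (same states). For $W_0=\mathsf{for}\ \{\}\ M\ S_p\ S_b$: (ForFalse) $M\Downarrow_{\mathsf{exp}}\mathsf{false}$ to $(G_1,L_1)$ gives $W_0\Downarrow\mathsf{regular}$ to $(G_1,L_1)$; (ForHalt1) $M$ true to $(G_1,L_1)$, $S_b\Downarrow\mathbb{M}_1$ to $(G_2,L_2)$ with $(\mathbb{M}_1,\mathbb{M}_2)\in\{(\mathsf{leave},\mathsf{leave}),(\mathsf{break},\mathsf{regular})\}$ give $W_0\Downarrow\mathbb{M}_2$ to $(G_2,L_2)$; (ForHalt2) $M$ true, $S_b\Downarrow\mathsf{regular}$ or $\mathsf{continue}$, $S_p\Downarrow\mathsf{leave}$ to $(G_3,L_3)$ give $W_0\Downarrow\mathsf{leave}$ to $(G_3,L_3)$; (ForLoop) $M$ true, $S_b\Downarrow\mathsf{regular}$ or $\mathsf{continue}$, $S_p\Downarrow\mathsf{regular}$ to $(G_3,L_3)$, and $W_0\Downarrow\mathbb{M}$ from $(G_3,L_3)$ to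 $(G_4,L_4)$ give $W_0\Downarrow\mathbb{M}$ to $(G_4,L_4)$. (Ident) $x\Downarrow_{\mathsf{exp}}L(x)$. (FunCall) evaluate arguments right to left, $\langle M_n\mid G;L;\mathcal{N}\rangle\Downarrow_{\mathsf{exp}}\langle v_n\mid G_1;L_1;\mathcal{N}\rangle$, …, $\langle M_1\mid G_{n-1};L_{n-1};\mathcal{N}\rangle\Downarrow_{\mathsf{exp}}\langle v_1\mid G_n;L_n;\mathcal{N}\rangle$; if $\langle S_b\mid G_n;L_f;\mathcal{N}\rangle\Downarrow\langle\mathbb{M}\mid G'';L';\mathcal{N}\rangle$ then $f(M_1..M_n)\Downarrow_{\mathsf{exp}}\langle L'(z_1)..L'(z_m)\rangle$ with state $(G'',L_n)$. (OpcCall) same arguments, then if $\langle op(v_1..v_n)\mid G_n\rangle\Downarrow_{\mathsf{opc}}\langle v'_1..v'_m\mid G''\rangle$ the result is $\langle v'_1..v'_m\rangle$ with state $(G'',L_n)$. *)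

theory Defs
  imports Main
begin

text \<open>Values 'v, identifiers (variables and function names) 'x, opcodes 'op.\<close>

datatype ('v, 'x, 'op) expr =
    FunCall 'x "('v, 'x, 'op) expr list"
  | OpCall 'op "('v, 'x, 'op) expr list"
  | Var 'x
  | Lit 'v

text \<open>Blocks \<open>{S*}\<close> occurring as components (bodies of if / switch cases /
  for-loop parts / function definitions) are represented by their statement lists;
  as statements they are \<open>Block ss\<close>.\<close>

datatype ('v, 'x, 'op) stmt =
    Block "('v, 'x, 'op) stmt list"
  | FunDef 'x "'x list" "'x list" "('v, 'x, 'op) stmt list"
  | Let "'x list" "('v, 'x, 'op) expr"
  | Assign "'x list" "('v, 'x, 'op) expr"
  | ExprStmt "('v, 'x, 'op) expr"
  | If "('v, 'x, 'op) expr" "('v, 'x, 'op) stmt list"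
  | Switch "('v, 'x, 'op) expr" "('v \<times> ('v, 'x, 'op) stmt list) list" "('v, 'x, 'op) stmt list"
  | For "('v, 'x, 'op) stmt list" "('v, 'x, 'op) expr" "('v, 'x, 'op) stmt list" "('v, 'x, 'op) stmt list"
      \<comment> \<open>for init condition post body\<close>
  | Break
  | Continue
  | Leave

datatype mode = Regular | BreakM | ContinueM | LeaveM

fun components :: "('v, 'x, 'op) stmt \<Rightarrow> ('v, 'x, 'op) stmt list" where
  "components (Block ss) = ss"
| "components (FunDef f ys zs b) = [Block b]"
| "components (If M b) = [Block b]"
| "components (Switch M cs d) = map (\<lambda>c. Block (snd c)) cs @ [Block d]"
| "components (For i M p b) = [Block i, Block p, Block b]"
| "components _ = []"

text \<open>\<open>occ S' p S\<close>: statement \<open>S\<close> occurs at position \<open>p\<close> in \<open>S'\<close>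
  (so \<open>S \<preceq> S'\<close>, as an occurrence).\<close>

inductive occ :: "('v, 'x, 'op) stmt \<Rightarrow> nat list \<Rightarrow> ('v, 'x, 'op) stmt \<Rightarrow> bool" where
  occ_here: "occ S [] S"
| occ_sub: "i < length (components S) \<Longrightarrow> occ (components S ! i) p T \<Longrightarrow> occ S (i # p) T"

text \<open>Loop-halting restriction. In \<open>For i M p b\<close> the body block is component 2;
  in \<open>FunDef f ys zs B\<close> the body block is component 0.\<close>

definition loop_halting :: "('v, 'x, 'op) stmt \<Rightarrow> bool" where
  "loop_halting S' \<longleftrightarrow>
    (\<forall>p. (occ S' p Break \<or> occ S' p Continue) \<longrightarrow>
      (\<exists>q Si' M' Sp' Sb' rest.
          occ S' q (For Si' M' Sp' Sb') \<and> p = q @ [2] @ rest \<and>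
          \<not> (\<exists>r g ys zs B rest'. occ S' (q @ r) (FunDef g ys zs B) \<and> p = q @ r @ [0] @ rest')))"

type_synonym ('v, 'x) lstate = "'x \<rightharpoonup> 'v"
type_synonym ('v, 'x, 'op) namespace = "'x \<rightharpoonup> ('x list \<times> 'x list \<times> ('v, 'x, 'op) stmt list)"

fun fundef_entries :: "('v, 'x, 'op) stmt \<Rightarrow> ('x \<times> ('x list \<times> 'x list \<times> ('v, 'x, 'op) stmt list)) list" where
  "fundef_entries (FunDef f ys zs b) = [(f, (ys, zs, b))]"
| "fundef_entries _ = []"

definition funs_list :: "('v, 'x, 'op) stmt list \<Rightarrow> ('x \<times> ('x list \<times> 'x list \<times> ('v, 'x, 'op) stmt list)) list" where
  "funs_list ss = concat (map fundef_entries ss)"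

text \<open>\<open>funs\<close> is defined (as a finite map) when the names defined directly in the
  block are distinct.\<close>
definition funs :: "('v, 'x, 'op) stmt list \<Rightarrow> ('v, 'x, 'op) namespace" where
  "funs ss = map_of (funs_list ss)"

text \<open>Parameters of the dialect: predicates \<open>tr\<close> (true) and \<open>fl\<close> (false) on values,
  and the opcode relation \<open>opc op vs G vs' G'\<close> meaning
  \<open>\<langle>op(vs) | G\<rangle> \<Down>opc \<langle>vs' | G'\<rangle>\<close>. Expressions evaluate to tuples (lists) of values.\<close>

inductive
  eval :: "('v::zero \<Rightarrow> bool) \<Rightarrow> ('v \<Rightarrow> bool) \<Rightarrow> ('op \<Rightarrow> 'v list \<Rightarrow> 'g \<Rightarrow> 'v list \<Rightarrow> 'g \<Rightarrow> bool) \<Rightarrow>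
           ('v, 'x, 'op) stmt \<Rightarrow> 'g \<Rightarrow> ('v, 'x) lstate \<Rightarrow> ('v, 'x, 'op) namespace \<Rightarrow>
           mode \<Rightarrow> 'g \<Rightarrow> ('v, 'x) lstate \<Rightarrow> bool"
and
  eval_seq :: "('v::zero \<Rightarrow> bool) \<Rightarrow> ('v \<Rightarrow> bool) \<Rightarrow> ('op \<Rightarrow> 'v list \<Rightarrow> 'g \<Rightarrow> 'v list \<Rightarrow> 'g \<Rightarrow> bool) \<Rightarrow>
           ('v, 'x, 'op) stmt list \<Rightarrow> 'g \<Rightarrow> ('v, 'x) lstate \<Rightarrow> ('v, 'x, 'op) namespace \<Rightarrow>
           mode \<Rightarrow> 'g \<Rightarrow> ('v, 'x) lstate \<Rightarrow> bool"
and
  eval_exp :: "('v::zero \<Rightarrow> bool) \<Rightarrow> ('v \<Rightarrow> bool) \<Rightarrow> ('op \<Rightarrow> 'v list \<Rightarrow> 'g \<Rightarrow> 'v list \<Rightarrow> 'g \<Rightarrow> bool) \<Rightarrow>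
           ('v, 'x, 'op) expr \<Rightarrow> 'g \<Rightarrow> ('v, 'x) lstate \<Rightarrow> ('v, 'x, 'op) namespace \<Rightarrow>
           'v list \<Rightarrow> 'g \<Rightarrow> ('v, 'x) lstate \<Rightarrow> bool"
and
  eval_args :: "('v::zero \<Rightarrow> bool) \<Rightarrow> ('v \<Rightarrow> bool) \<Rightarrow> ('op \<Rightarrow> 'v list \<Rightarrow> 'g \<Rightarrow> 'v list \<Rightarrow> 'g \<Rightarrow> bool) \<Rightarrow>
           ('v, 'x, 'op) expr list \<Rightarrow> 'g \<Rightarrow> ('v, 'x) lstate \<Rightarrow> ('v, 'x, 'op) namespace \<Rightarrow>
           'v list \<Rightarrow> 'g \<Rightarrow> ('v, 'x) lstate \<Rightarrow> bool"
for tr :: "'v::zero \<Rightarrow> bool" and fl :: "'v \<Rightarrow> bool"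
and opc :: "'op \<Rightarrow> 'v list \<Rightarrow> 'g \<Rightarrow> 'v list \<Rightarrow> 'g \<Rightarrow> bool"
where
  EvBlock:
  "\<lbrakk> distinct (map fst (funs_list ss)); dom N \<inter> dom (funs ss) = {};
     eval_seq tr fl opc ss G L (N ++ funs ss) m G1 L1 \<rbrakk>
   \<Longrightarrow> eval tr fl opc (Block ss) G L N m G1 (L1 |` dom L)"
| SeqEmpty: "eval_seq tr fl opc [] G L N Regular G L"
| SeqReg:
  "\<lbrakk> eval tr fl opc S1 G L N Regular G1 L1; eval_seq tr fl opc Ss G1 L1 N m G2 L2 \<rbrakk>
   \<Longrightarrow> eval_seq tr fl opc (S1 # Ss) G L N m G2 L2"
| SeqIrreg:
  "\<lbrakk> eval tr fl opc S1 G L N m G1 L1; m \<in> {BreakM, ContinueM, LeaveM} \<rbrakk>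
   \<Longrightarrow> eval_seq tr fl opc (S1 # Ss) G L N m G1 L1"
| EvFunDef: "eval tr fl opc (FunDef f ys zs b) G L N Regular G L"
| EvDecl:
  "\<lbrakk> eval_exp tr fl opc M G L N vs G1 L1; length xs = length vs; set xs \<inter> dom L = {} \<rbrakk>
   \<Longrightarrow> eval tr fl opc (Let xs M) G L N Regular G1 (L1(xs [\<mapsto>] vs))"
| EvAssign:
  "\<lbrakk> eval_exp tr fl opc M G L N vs G1 L1; length xs = length vs; set xs \<subseteq> dom L \<rbrakk>
   \<Longrightarrow> eval tr fl opc (Assign xs M) G L N Regular G1 (L1(xs [\<mapsto>] vs))"
| EvExprStmt:
  "eval_exp tr fl opc M G L N [] G1 L1 \<Longrightarrow> eval tr fl opc (ExprStmt M) G L N Regular G1 L1"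
| EvIfFalse:
  "\<lbrakk> eval_exp tr fl opc M G L N [v] G0 L0; fl v \<rbrakk>
   \<Longrightarrow> eval tr fl opc (If M b) G L N Regular G0 L0"
| EvIfTrue:
  "\<lbrakk> eval_exp tr fl opc M G L N [v] G0 L0; tr v; eval tr fl opc (Block b) G0 L0 N m G1 L1 \<rbrakk>
   \<Longrightarrow> eval tr fl opc (If M b) G L N m G1 L1"
| EvSwitchDefault:
  "\<lbrakk> eval_exp tr fl opc M G L N [v] G0 L0; v \<notin> fst ` set cs;
     eval tr fl opc (Block d) G0 L0 N m G1 L1 \<rbrakk>
   \<Longrightarrow> eval tr fl opc (Switch M cs d) G L N m G1 L1"
| EvSwitchCase:
  "\<lbrakk> eval_exp tr fl opc M G L N [v] G0 L0; k < length cs; fst (cs ! k) = v;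
     v \<notin> fst ` set (take k cs);
     eval tr fl opc (Block (snd (cs ! k))) G0 L0 N m G1 L1 \<rbrakk>
   \<Longrightarrow> eval tr fl opc (Switch M cs d) G L N m G1 L1"
| EvForInit:
  "\<lbrakk> Si \<noteq> []; eval tr fl opc (Block (Si @ [For [] M Sp Sb])) G L N m G1 L1 \<rbrakk>
   \<Longrightarrow> eval tr fl opc (For Si M Sp Sb) G L N m G1 L1"
| EvForFalse:
  "\<lbrakk> eval_exp tr fl opc M G L N [v] G1 L1; fl v \<rbrakk>
   \<Longrightarrow> eval tr fl opc (For [] M Sp Sb) G L N Regular G1 L1"
| EvForHalt1:
  "\<lbrakk> eval_exp tr fl opc M G L N [v] G1 L1; tr v; eval tr fl opc (Block Sb) G1 L1 N m1 G2 L2;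
     (m1, m2) \<in> {(LeaveM, LeaveM), (BreakM, Regular)} \<rbrakk>
   \<Longrightarrow> eval tr fl opc (For [] M Sp Sb) G L N m2 G2 L2"
| EvForHalt2:
  "\<lbrakk> eval_exp tr fl opc M G L N [v] G1 L1; tr v; eval tr fl opc (Block Sb) G1 L1 N m1 G2 L2;
     m1 \<in> {Regular, ContinueM}; eval tr fl opc (Block Sp) G2 L2 N LeaveM G3 L3 \<rbrakk>
   \<Longrightarrow> eval tr fl opc (For [] M Sp Sb) G L N LeaveM G3 L3"
| EvForLoop:
  "\<lbrakk> eval_exp tr fl opc M G L N [v] G1 L1; tr v; eval tr fl opc (Block Sb) G1 L1 N m1 G2 L2;
     m1 \<in> {Regular, ContinueM}; eval tr fl opc (Block Sp) G2 L2 N Regular G3 L3;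
     eval tr fl opc (For [] M Sp Sb) G3 L3 N m G4 L4 \<rbrakk>
   \<Longrightarrow> eval tr fl opc (For [] M Sp Sb) G L N m G4 L4"
| EvLit: "eval_exp tr fl opc (Lit v) G L N [v] G L"
| EvIdent: "L x = Some v \<Longrightarrow> eval_exp tr fl opc (Var x) G L N [v] G L"
| EvFunCall:
  "\<lbrakk> N f = Some (ys, zs, b);
     eval_args tr fl opc Ms G L N vs Gn Ln; length vs = length ys; distinct (ys @ zs);
     eval tr fl opc (Block b) Gn (map_of (zip ys vs) ++ map_of (zip zs (replicate (length zs) 0))) N m G'' L';
     set zs \<subseteq> dom L' \<rbrakk>
   \<Longrightarrow> eval_exp tr fl opc (FunCall f Ms) G L N (map (\<lambda>z. the (L' z)) zs) G'' Ln"
| EvOpcCall: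
  "\<lbrakk> eval_args tr fl opc Ms G L N vs Gn Ln; opc op vs Gn vs' G'' \<rbrakk>
   \<Longrightarrow> eval_exp tr fl opc (OpCall op Ms) G L N vs' G'' Ln"
| ArgsNil: "eval_args tr fl opc [] G L N [] G L"
| ArgsSnoc:
  "\<lbrakk> eval_exp tr fl opc M G L N [v] G1 L1; eval_args tr fl opc Ms G1 L1 N vs G2 L2 \<rbrakk>
   \<Longrightarrow> eval_args tr fl opc (Ms @ [M]) G L N (vs @ [v]) G2 L2"

end

theory Submission
  imports Defs
begin

text \<open>A break or continue can only end the evaluation of a loop body: the loop rules turn
  these modes into a regular iteration or a regular exit. So a statement whose jumps all sit
  inside loop bodies never ends in break or continue mode. The loop-halting restriction
  provides exactly this, once function bodies, which are not executed in place, are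
  disregarded. The semantics has no rule for the statements break and continue themselves;
  the argument does not rely on that.\<close>

text \<open>The post-iteration block of a loop is not inspected: if it ends in break or continue
  mode, no rule applies to the loop at all.\<close>

fun jumps_enclosed :: "('v, 'x, 'op) stmt \<Rightarrow> bool" where
  "jumps_enclosed Break = False"
| "jumps_enclosed Continue = False"
| "jumps_enclosed (Block ss) = (\<forall>s\<in>set ss. jumps_enclosed s)"
| "jumps_enclosed (If M b) = (\<forall>s\<in>set b. jumps_enclosed s)"
| "jumps_enclosed (Switch M cs d) =
     ((\<forall>c\<in>set cs. \<forall>s\<in>set (snd c). jumps_enclosed s) \<and> (\<forall>s\<in>set d. jumps_enclosed s))"
| "jumps_enclosed (For i M p b) = (\<forall>s\<in>set i. jumps_enclosed s)"
| "jumps_enclosed _ = True"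

lemma jumps_enclosed_eval_mode:
  shows "eval tr fl opc S G L N m G' L' \<Longrightarrow> jumps_enclosed S \<Longrightarrow> m \<notin> {BreakM, ContinueM}"
    and "eval_seq tr fl opc ss G L N m G' L' \<Longrightarrow> \<forall>s\<in>set ss. jumps_enclosed s \<Longrightarrow>
           m \<notin> {BreakM, ContinueM}"
    and "eval_exp tr fl opc e G L N vs G' L' \<Longrightarrow> True"
    and "eval_args tr fl opc es G L N vs G' L' \<Longrightarrow> True"
proof (induction rule: eval_eval_seq_eval_exp_eval_args.inducts)
  case (EvSwitchCase M G L N v G0 L0 k cs d m G1 L1)
  then show ?case by (auto dest!: nth_mem)
qed auto

lemma occ_Nil_iff: "occ S [] T \<longleftrightarrow> T = S"
  by (auto elim: occ.cases intro: occ.intros)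

lemma occ_Cons_iff: "occ S (i # p) T \<longleftrightarrow> i < length (components S) \<and> occ (components S ! i) p T"
  by (auto elim: occ.cases intro: occ.intros)

definition jumps_in_loop_bodies :: "('v, 'x, 'op) stmt \<Rightarrow> bool" where
  "jumps_in_loop_bodies S \<longleftrightarrow>
    (\<forall>p. (occ S p Break \<or> occ S p Continue) \<longrightarrow>
      (\<exists>q Si M Sp Sb rest. occ S q (For Si M Sp Sb) \<and> p = q @ 2 # rest))"

lemma loop_halting_imp_jumps_in_loop_bodies: "loop_halting S \<Longrightarrow> jumps_in_loop_bodies S"
  unfolding loop_halting_def jumps_in_loop_bodies_def by fastforce

lemma jumps_in_loop_bodies_component:
  assumes "jumps_in_loop_bodies S" and "i < length (components S)"
    and "\<And>Si M Sp Sb. S = For Si M Sp Sb \<Longrightarrow> i \<noteq> 2"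
  shows "jumps_in_loop_bodies (components S ! i)"
  unfolding jumps_in_loop_bodies_def
proof (intro allI impI)
  fix p
  assume "occ (components S ! i) p Break \<or> occ (components S ! i) p Continue"
  then have "occ S (i # p) Break \<or> occ S (i # p) Continue"
    using assms(2) by (simp add: occ_Cons_iff)
  then obtain q Si M Sp Sb rest where loop: "occ S q (For Si M Sp Sb)" and "i # p = q @ 2 # rest"
    using assms(1) unfolding jumps_in_loop_bodies_def by blast
  moreover have "q \<noteq> []"
    using loop \<open>i # p = q @ 2 # rest\<close> assms(3) by (auto simp: occ_Nil_iff)
  ultimately obtain q' where "q = i # q'" and "p = q' @ 2 # rest"
    by (auto simp: neq_Nil_conv)
  with loop have "occ (components S ! i) q' (For Si M Sp Sb)"
    by (simp add: occ_Cons_iff)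
  with \<open>p = q' @ 2 # rest\<close>
  show "\<exists>q Si M Sp Sb rest. occ (components S ! i) q (For Si M Sp Sb) \<and> p = q @ 2 # rest"
    by blast
qed

lemma jumps_in_loop_bodies_Block_member:
  assumes "jumps_in_loop_bodies (Block ss)" and "s \<in> set ss"
  shows "jumps_in_loop_bodies s"
proof -
  from assms(2) obtain j where "j < length ss" and "ss ! j = s"
    unfolding in_set_conv_nth by blast
  with jumps_in_loop_bodies_component[OF assms(1), of j] show ?thesis
    by simp
qed

lemma jumps_in_loop_bodies_not_jump: "jumps_in_loop_bodies S \<Longrightarrow> S \<noteq> Break \<and> S \<noteq> Continue"
  unfolding jumps_in_loop_bodies_def using occ_here by fastforce

lemma jumps_in_loop_bodies_imp_jumps_enclosed: "jumps_in_loop_bodies S \<Longrightarrow> jumps_enclosed S"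
proof (induction S)
  case (Block ss)
  then show ?case
    by (simp add: jumps_in_loop_bodies_Block_member)
next
  case (If M b)
  have "jumps_in_loop_bodies (Block b)"
    using jumps_in_loop_bodies_component[OF If.prems, of 0] by simp
  with If.IH show ?case
    by (simp add: jumps_in_loop_bodies_Block_member)
next
  case (Switch M cs d)
  have case_blocks: "jumps_in_loop_bodies (Block (snd c))" if "c \<in> set cs" for c
  proof -
    from that obtain k where "k < length cs" and "cs ! k = c"
      unfolding in_set_conv_nth by blast
    then show ?thesis
      using jumps_in_loop_bodies_component[OF Switch.prems, of k] by (simp add: nth_append)
  qed
  have default: "jumps_in_loop_bodies (Block d)"
    using jumps_in_loop_bodies_component[OF Switch.prems, of "length cs"] by (simp add: nth_append)
  show ?case
  proof (simp, intro conjI ballI)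
    fix c s
    assume c: "c \<in> set cs" and s: "s \<in> set (snd c)"
    have "jumps_in_loop_bodies s"
      using case_blocks[OF c] s by (rule jumps_in_loop_bodies_Block_member)
    then show "jumps_enclosed s"
      by (rule Switch.IH(1)[OF c snds.intros s])
  next
    fix s
    assume "s \<in> set d"
    with default show "jumps_enclosed s"
      by (auto intro: Switch.IH(2) jumps_in_loop_bodies_Block_member)
  qed
next
  case (For i M p b)
  have "jumps_in_loop_bodies (Block i)"
    using jumps_in_loop_bodies_component[OF For.prems, of 0] by simp
  with For.IH(1) show ?case
    by (simp add: jumps_in_loop_bodies_Block_member)
qed (auto dest: jumps_in_loop_bodies_not_jump)

theorem lemma3:
  fixes tr fl :: "'v::zero \<Rightarrow> bool"
    and opc :: "'op \<Rightarrow> 'v list \<Rightarrow> 'g \<Rightarrow> 'v list \<Rightarrow> 'g \<Rightarrow> bool"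
    and Si Sp Sb :: "('v, 'x, 'op) stmt list"
    and M :: "('v, 'x, 'op) expr"
    and G :: 'g and L :: "('v, 'x) lstate" and N :: "('v, 'x, 'op) namespace"
    and m :: mode
  assumes "loop_halting (For Si M Sp Sb)"
    and "m \<in> {BreakM, ContinueM}"
  shows "\<not> (\<exists>G' L'. eval tr fl opc (For Si M Sp Sb) G L N m G' L')"
proof
  assume "\<exists>G' L'. eval tr fl opc (For Si M Sp Sb) G L N m G' L'"
  then obtain G' L' where "eval tr fl opc (For Si M Sp Sb) G L N m G' L'"
    by blast
  moreover have "jumps_enclosed (For Si M Sp Sb)"
    using assms(1)
    by (intro jumps_in_loop_bodies_imp_jumps_enclosed loop_halting_imp_jumps_in_loop_bodies)
  ultimately have "m \<notin> {BreakM, ContinueM}"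
    by (rule jumps_enclosed_eval_mode(1))
  with assms(2) show False
    by contradiction
qed

end
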